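(* For every $m\ge1$ and every $\theta\in(0,1]$, $\lim_{n\to\infty}\rho(\mathrm{IRV},m,n,\theta)=0$. Equivalently, the critical value of IRV in the Perturbed Culture model is $\theta_c(\mathrm{IRV},m)=0$.
   Context: A ranking is a strict total order on the candidates. A discrete profile consists of candidates, $n$ voters and a ranking $P_v$ per voter. For a set $K$ of candidates, $P_K$ restricts each ranking to $K$; the Plurality score $s_{\mathrm{Plu}}(c,P)$ is the number of voters ranking $c$ first. IRV: starting from all candidates, repeatedly eliminate a remaining candidate with minimal Plurality score in the profile restricted to the remaining candidates (ties broken by an arbitrary fixed rule); the last remaining candidate wins. CM: a rule $f$ is coalitionally manipulable in a discrete profile $P$ if there is a discrete $Q$ with the same candidates and voters such that $f(Q)\neq f(P)$ and every voter $v$ with $Q_v\ne P_v$ prefers $f(Q)$ to $f(P)$ according to $P_v$. Perturbed Culture ($m,n\ge1$, $\theta\in(0,1]$): random discrete profile with candidates $\{1,\dots,m\}$, voters $\{1,\dots,n\}$, each voter independently having ranking $1\succ\cdots\succ m$ with probability $\theta$ and a uniformly random ranking with probability $1-\theta$. $\rho(f,m,n,\theta)$: probability that $f$ is CM in the random profile. For a rule $f$, the critical value $\theta_c(f,m)$ (when it exists) is the common value of $\theta_l$, the largest value in $[0,1]$ such that $\theta<\theta_l$ implies $\lim_n\rho=1$, and $\theta_u$, the smallest value in $[0,1]$ such that $\theta>\theta_u$ implies $\lim_n\rho=0$. *)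

theory Defs
  imports Complex_Main
begin

text \<open>A ranking is a list containing each
candidate exactly once, most preferred first.\<close>

definition rankings :: "nat \<Rightarrow> nat list set" where
  "rankings m = {r. distinct r \<and> set r = {1..m}}"

definition profiles :: "nat \<Rightarrow> nat \<Rightarrow> nat list list set" where
  "profiles m n = {P. length P = n \<and> set P \<subseteq> rankings m}"

definition prefers :: "nat list \<Rightarrow> nat \<Rightarrow> nat \<Rightarrow> bool" where
  "prefers r a b \<longleftrightarrow> (\<exists>i j. i < j \<and> j < length r \<and> r ! i = a \<and> r ! j = b)"

definition plu_score :: "nat list list \<Rightarrow> nat set \<Rightarrow> nat \<Rightarrow> nat" where
  "plu_score P K c = card {v. v < length P \<and> hd (filter (\<lambda>d. d \<in> K) (P ! v)) = c}"

definition plu_losers :: "nat list list \<Rightarrow> nat set \<Rightarrow> nat set" where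
  "plu_losers P K = {c \<in> K. \<forall>d \<in> K. plu_score P K c \<le> plu_score P K d}"

text \<open>IRV with a fixed tie-breaking rule tb: tb K T is the candidate eliminated
among the tied candidates T (with minimal score) when K remains.
The first argument is fuel (at least the number of candidates suffices).\<close>
fun irv_aux :: "(nat set \<Rightarrow> nat set \<Rightarrow> nat) \<Rightarrow> nat list list \<Rightarrow> nat \<Rightarrow> nat set \<Rightarrow> nat" where
  "irv_aux tb P 0 K = (SOME c. c \<in> K)"
| "irv_aux tb P (Suc k) K =
     (if card K \<le> 1 then (SOME c. c \<in> K)
      else irv_aux tb P k (K - {tb K (plu_losers P K)}))"

definition IRV :: "(nat set \<Rightarrow> nat set \<Rightarrow> nat) \<Rightarrow> nat \<Rightarrow> nat list list \<Rightarrow> nat" where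
  "IRV tb m P = irv_aux tb P m {1..m}"

definition CM :: "(nat list list \<Rightarrow> nat) \<Rightarrow> nat \<Rightarrow> nat list list \<Rightarrow> bool" where
  "CM f m P \<longleftrightarrow> (\<exists>Q \<in> profiles m (length P). f Q \<noteq> f P \<and>
      (\<forall>v < length P. Q ! v \<noteq> P ! v \<longrightarrow> prefers (P ! v) (f Q) (f P)))"

definition pc_weight :: "nat \<Rightarrow> real \<Rightarrow> nat list \<Rightarrow> real" where
  "pc_weight m \<theta> r = \<theta> * (if r = [1..<m+1] then 1 else 0) + (1 - \<theta>) / real (card (rankings m))"

definition rho :: "(nat list list \<Rightarrow> nat) \<Rightarrow> nat \<Rightarrow> nat \<Rightarrow> real \<Rightarrow> real" where
  "rho f m n \<theta> = (\<Sum>P \<in> {P \<in> profiles m n. CM f m P}. \<Prod>v<n. pc_weight m \<theta> (P ! v))"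

end

(* If candidate 1 has, in every set K of at least two candidates containing it, a Plurality
   score above the average n / |K|, then IRV elects 1 and no coalition can change that: while
   a rival c is still running, 1 is never among the Plurality losers, and a voter who ranks 1
   first among a K containing c ranks 1 above c, so does not join a coalition for c; hence the
   score of 1 in every K containing 1 and c can only grow, and c is eliminated before 1.
   Under Perturbed Culture a voter ranks 1 first among K with probability
   theta + (1 - theta) / |K|, which exceeds 1 / |K| by theta (1 - 1 / |K|) > 0. Chebyshev's
   inequality bounds the probability that the score of 1 in K falls to the average by O(1/n),
   and a union bound over the finitely many K gives rho = O(1/n). *)

theory Submission
  imports Defs "HOL-Combinatorics.Transposition"
begin

section \<open>Expectations under independent identically distributed ballots\<close>

definition product_expectation :: "('a \<Rightarrow> real) \<Rightarrow> 'a set \<Rightarrow> nat \<Rightarrow> ('a list \<Rightarrow> real) \<Rightarrow> real" where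
  "product_expectation w R n F =
     (\<Sum>xs \<in> {xs. set xs \<subseteq> R \<and> length xs = n}. (\<Prod>i<n. w (xs ! i)) * F xs)"

definition weighted_mean :: "('a \<Rightarrow> real) \<Rightarrow> 'a set \<Rightarrow> ('a \<Rightarrow> real) \<Rightarrow> real" where
  "weighted_mean w R X = (\<Sum>x\<in>R. w x * X x)"

definition weighted_variance :: "('a \<Rightarrow> real) \<Rightarrow> 'a set \<Rightarrow> ('a \<Rightarrow> real) \<Rightarrow> real" where
  "weighted_variance w R X = (\<Sum>x\<in>R. w x * (X x - weighted_mean w R X)\<^sup>2)"

lemma product_expectation_0 [simp]: "product_expectation w R 0 F = F []"
proof -
  have "{xs. set xs \<subseteq> R \<and> length xs = 0} = {[]}"
    by auto
  then show ?thesis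
    by (simp add: product_expectation_def)
qed

lemma product_expectation_Suc:
  "product_expectation w R (Suc n) F = (\<Sum>x\<in>R. w x * product_expectation w R n (\<lambda>xs. F (x # xs)))"
proof -
  let ?L = "\<lambda>n. {xs. set xs \<subseteq> R \<and> length xs = n}"
  have "inj_on (\<lambda>(xs, x). x # xs) (?L n \<times> R)"
    by (auto simp: inj_on_def)
  then have "product_expectation w R (Suc n) F =
      (\<Sum>(xs, x)\<in>?L n \<times> R. w x * ((\<Prod>i<n. w (xs ! i)) * F (x # xs)))"
    unfolding product_expectation_def lists_length_Suc_eq
    by (simp add: sum.reindex prod.lessThan_Suc_shift case_prod_unfold mult_ac del: prod.lessThan_Suc)
  also have "\<dots> = (\<Sum>x\<in>R. w x * product_expectation w R n (\<lambda>xs. F (x # xs)))"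
    by (simp add: product_expectation_def sum.cartesian_product[symmetric] sum.swap[of _ "?L n"]
        sum_distrib_left)
  finally show ?thesis .
qed

lemma product_expectation_add:
  "product_expectation w R n (\<lambda>xs. F xs + G xs) = product_expectation w R n F + product_expectation w R n G"
  by (simp add: product_expectation_def distrib_left sum.distrib)

lemma product_expectation_cmult:
  "product_expectation w R n (\<lambda>xs. c * F xs) = c * product_expectation w R n F"
  by (simp add: product_expectation_def sum_distrib_left mult_ac)

lemma product_expectation_sum:
  "finite S \<Longrightarrow> product_expectation w R n (\<lambda>xs. \<Sum>s\<in>S. F s xs) = (\<Sum>s\<in>S. product_expectation w R n (F s))"
proof (induction S rule: finite_induct)
  case empty
  show ?case
    by (simp add: product_expectation_def)
qed (simp add: product_expectation_add)

lemma product_expectation_const: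
  "sum w R = 1 \<Longrightarrow> product_expectation w R n (\<lambda>_. c) = c"
  by (induction n) (simp_all add: product_expectation_Suc flip: sum_distrib_right)

lemma product_expectation_mono:
  assumes "\<And>x. x \<in> R \<Longrightarrow> 0 \<le> w x"
    and "\<And>xs. set xs \<subseteq> R \<Longrightarrow> length xs = n \<Longrightarrow> F xs \<le> G xs"
  shows "product_expectation w R n F \<le> product_expectation w R n G"
  unfolding product_expectation_def
  using assms by (intro sum_mono mult_left_mono prod_nonneg) (auto dest: nth_mem)

lemma product_expectation_sum_list:
  assumes "sum w R = 1"
  shows "product_expectation w R n (\<lambda>xs. \<Sum>x\<leftarrow>xs. X x) = n * weighted_mean w R X"
proof (induction n)
  case (Suc n)
  have "product_expectation w R (Suc n) (\<lambda>xs. \<Sum>x\<leftarrow>xs. X x) = (\<Sum>x\<in>R. w x * (X x + n * weighted_mean w R X))"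
    using Suc assms by (simp add: product_expectation_Suc product_expectation_add product_expectation_const)
  also have "\<dots> = weighted_mean w R X + (\<Sum>x\<in>R. w x) * (n * weighted_mean w R X)"
    by (simp add: weighted_mean_def[of w R X, symmetric] distrib_left sum.distrib sum_distrib_right)
  also have "\<dots> = Suc n * weighted_mean w R X"
    using assms by (simp add: algebra_simps)
  finally show ?case .
qed simp

lemma product_expectation_sum_list_deviation:
  fixes w X :: "'a \<Rightarrow> real"
  assumes "sum w R = 1"
  defines "\<mu> \<equiv> weighted_mean w R X"
  shows "product_expectation w R n (\<lambda>xs. ((\<Sum>x\<leftarrow>xs. X x) - n * \<mu>)\<^sup>2) = n * weighted_variance w R X"
proof (induction n)
  case (Suc n)
  let ?D = "\<lambda>xs. (\<Sum>x\<leftarrow>xs. X x) - n * \<mu>"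
  have centered: "product_expectation w R n ?D = 0"
    using product_expectation_add[of w R n "\<lambda>xs. \<Sum>x\<leftarrow>xs. X x" "\<lambda>_. - n * \<mu>"]
    by (simp add: assms product_expectation_sum_list product_expectation_const)
  have square: "((\<Sum>y\<leftarrow>x # xs. X y) - Suc n * \<mu>)\<^sup>2 = (X x - \<mu>)\<^sup>2 + 2 * (X x - \<mu>) * ?D xs + (?D xs)\<^sup>2"
    for x xs
    by (simp add: power2_eq_square algebra_simps)
  have "product_expectation w R (Suc n) (\<lambda>xs. ((\<Sum>x\<leftarrow>xs. X x) - Suc n * \<mu>)\<^sup>2) =
      (\<Sum>x\<in>R. w x * ((X x - \<mu>)\<^sup>2 + n * weighted_variance w R X))"
    unfolding product_expectation_Suc square using Suc centered
    by (simp add: product_expectation_add product_expectation_cmult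
        product_expectation_const assms(1))
  also have "\<dots> = weighted_variance w R X + (\<Sum>x\<in>R. w x) * (n * weighted_variance w R X)"
    by (simp add: weighted_variance_def \<mu>_def distrib_left sum.distrib sum_distrib_right)
  also have "\<dots> = Suc n * weighted_variance w R X"
    using assms by (simp add: algebra_simps)
  finally show ?case .
qed simp

lemma product_expectation_sum_list_lower_tail:
  assumes "\<And>x. x \<in> R \<Longrightarrow> 0 \<le> w x" and "sum w R = 1" and "0 < \<delta>" and "0 < n"
  shows "product_expectation w R n (\<lambda>xs. of_bool ((\<Sum>x\<leftarrow>xs. X x) \<le> n * (weighted_mean w R X - \<delta>)))
    \<le> weighted_variance w R X / (n * \<delta>\<^sup>2)"
proof -
  let ?\<mu> = "weighted_mean w R X"
  have pointwise: "of_bool (s \<le> n * (?\<mu> - \<delta>)) \<le> inverse ((n * \<delta>)\<^sup>2) * (s - n * ?\<mu>)\<^sup>2" for s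
  proof (cases "s \<le> n * (?\<mu> - \<delta>)")
    case True
    then have "n * \<delta> \<le> n * ?\<mu> - s"
      by (simp add: algebra_simps)
    then have "(n * \<delta>)\<^sup>2 \<le> (s - n * ?\<mu>)\<^sup>2"
      using assms(3) by (subst power2_commute) (simp add: power_mono)
    then show ?thesis
      using True assms(3,4) by (simp add: field_simps)
  qed simp
  have "product_expectation w R n (\<lambda>xs. of_bool ((\<Sum>x\<leftarrow>xs. X x) \<le> n * (?\<mu> - \<delta>)))
      \<le> product_expectation w R n (\<lambda>xs. inverse ((n * \<delta>)\<^sup>2) * ((\<Sum>x\<leftarrow>xs. X x) - n * ?\<mu>)\<^sup>2)"
    using assms(1) pointwise by (rule product_expectation_mono)
  also have "\<dots> = weighted_variance w R X / (n * \<delta>\<^sup>2)"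
    using assms(2-4)
    by (simp only: product_expectation_cmult product_expectation_sum_list_deviation)
      (simp add: power2_eq_square field_simps)
  finally show ?thesis .
qed

section \<open>Rankings under the Perturbed Culture\<close>

abbreviation top_among :: "nat set \<Rightarrow> nat list \<Rightarrow> nat" where
  "top_among K r \<equiv> hd (filter (\<lambda>d. d \<in> K) r)"

lemma finite_rankings: "finite (rankings m)"
proof (rule finite_subset)
  show "rankings m \<subseteq> {xs. set xs \<subseteq> {1..m} \<and> length xs = m}"
    by (auto simp: rankings_def dest: distinct_card)
qed (simp add: finite_lists_length_eq)

lemma upt_in_rankings: "[1..<m+1] \<in> rankings m"
  by (auto simp: rankings_def)

lemma card_rankings_pos: "0 < card (rankings m)"
  using finite_rankings upt_in_rankings card_gt_0_iff by blast

lemma map_transpose_in_rankings: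
  assumes "r \<in> rankings m" and "a \<in> {1..m}" and "b \<in> {1..m}"
  shows "map (transpose a b) r \<in> rankings m"
  using assms by (simp add: rankings_def distinct_map)

lemma profiles_eq_lists: "profiles m n = {P. set P \<subseteq> rankings m \<and> length P = n}"
  by (auto simp: profiles_def)

lemma rho_eq_product_expectation:
  "rho f m n \<theta> = product_expectation (pc_weight m \<theta>) (rankings m) n (\<lambda>P. of_bool (CM f m P))"
proof -
  have "finite (profiles m n)"
    by (simp add: profiles_eq_lists finite_lists_length_eq finite_rankings)
  then have "rho f m n \<theta> = (\<Sum>P\<in>profiles m n. if CM f m P then \<Prod>v<n. pc_weight m \<theta> (P ! v) else 0)"
    unfolding rho_def by (rule sum.inter_filter)
  also have "\<dots> = product_expectation (pc_weight m \<theta>) (rankings m) n (\<lambda>P. of_bool (CM f m P))"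
    unfolding product_expectation_def profiles_eq_lists[symmetric] by (intro sum.cong) auto
  finally show ?thesis .
qed

lemma weighted_mean_pc_weight:
  "weighted_mean (pc_weight m \<theta>) (rankings m) X =
     \<theta> * X [1..<m+1] + (1 - \<theta>) * (\<Sum>r\<in>rankings m. X r) / card (rankings m)"
proof -
  define u where "u = [1..<m+1]"
  have "u \<in> rankings m"
    unfolding u_def by (rule upt_in_rankings)
  have "(\<Sum>r\<in>rankings m. \<theta> * (if r = u then 1 else 0) * X r) =
      (\<Sum>r\<in>rankings m. if r = u then \<theta> * X r else 0)"
    by (rule sum.cong) auto
  also have "\<dots> = \<theta> * X u"
    using \<open>u \<in> rankings m\<close> finite_rankings[of m] by simp
  finally show ?thesis
    unfolding weighted_mean_def pc_weight_def u_def[symmetric]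
    by (simp add: distrib_right sum.distrib sum_distrib_left sum_divide_distrib)
qed

lemma sum_pc_weight: "sum (pc_weight m \<theta>) (rankings m) = 1"
  using weighted_mean_pc_weight[of m \<theta> "\<lambda>_. 1"] card_rankings_pos[of m] by (simp add: weighted_mean_def)

lemma pc_weight_nonneg: "0 \<le> \<theta> \<Longrightarrow> \<theta> \<le> 1 \<Longrightarrow> 0 \<le> pc_weight m \<theta> r"
  by (simp add: pc_weight_def)

lemma top_among_in:
  assumes "d \<in> K" and "d \<in> set r"
  shows "top_among K r \<in> K"
proof -
  have "filter (\<lambda>d. d \<in> K) r \<noteq> []"
    using assms by (auto simp: filter_empty_conv)
  then show ?thesis
    using hd_in_set by fastforce
qed

lemma top_among_map_transpose:
  assumes "a \<in> K" and "b \<in> K" and "d \<in> K" and "d \<in> set r"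
  shows "top_among K (map (transpose a b) r) = transpose a b (top_among K r)"
proof -
  have "(\<lambda>d. d \<in> K) \<circ> transpose a b = (\<lambda>d. d \<in> K)"
    using assms(1,2) by (auto simp: fun_eq_iff transpose_def)
  moreover have "filter (\<lambda>d. d \<in> K) r \<noteq> []"
    using assms(3,4) by (auto simp: filter_empty_conv)
  ultimately show ?thesis
    by (simp add: filter_map hd_map)
qed

lemma card_rankings_with_top_eq:
  assumes "K \<subseteq> {1..m}" and "a \<in> K" and "b \<in> K"
  shows "card {r \<in> rankings m. top_among K r = a} = card {r \<in> rankings m. top_among K r = b}"
proof (rule bij_betw_same_card[of "map (transpose a b)"], rule bij_betw_byWitness[of _ "map (transpose a b)"])
  have top: "top_among K (map (transpose a b) r) = transpose a b (top_among K r)" if "r \<in> rankings m" for r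
    using that assms by (intro top_among_map_transpose[of _ _ _ a]) (auto simp: rankings_def)
  have ranking: "map (transpose a b) r \<in> rankings m" if "r \<in> rankings m" for r
    using that assms by (intro map_transpose_in_rankings) auto
  show "map (transpose a b) ` {r \<in> rankings m. top_among K r = a} \<subseteq> {r \<in> rankings m. top_among K r = b}"
    and "map (transpose a b) ` {r \<in> rankings m. top_among K r = b} \<subseteq> {r \<in> rankings m. top_among K r = a}"
    using top ranking by auto
qed (simp_all add: map_idI)

lemma card_rankings_eq_mult_card_top:
  assumes "K \<subseteq> {1..m}" and "a \<in> K"
  shows "card (rankings m) = card K * card {r \<in> rankings m. top_among K r = a}"
proof -
  have finite: "finite K"
    using assms(1) finite_subset by blast
  have "rankings m = (\<Union>d\<in>K. {r \<in> rankings m. top_among K r = d})"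
    using assms by (auto simp: rankings_def intro: top_among_in)
  also have "card \<dots> = (\<Sum>d\<in>K. card {r \<in> rankings m. top_among K r = d})"
    using finite finite_rankings[of m] by (intro card_UN_disjoint) auto
  also have "\<dots> = (\<Sum>d\<in>K. card {r \<in> rankings m. top_among K r = a})"
    using assms by (intro sum.cong card_rankings_with_top_eq) auto
  finally show ?thesis
    by simp
qed

lemma weighted_mean_top_among_1:
  assumes "K \<subseteq> {1..m}" and "1 \<in> K"
  shows "weighted_mean (pc_weight m \<theta>) (rankings m) (\<lambda>r. of_bool (top_among K r = 1)) =
    \<theta> + (1 - \<theta>) / card K"
proof -
  let ?c = "card {r \<in> rankings m. top_among K r = 1}"
  have "[1..<m+1] = 1 # [Suc 1..<m+1]"
    using assms by (intro upt_conv_Cons) auto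
  then have top_upt: "top_among K [1..<m+1] = 1"
    using assms(2) by simp
  have "card (rankings m) = card K * ?c"
    using assms by (rule card_rankings_eq_mult_card_top)
  moreover have "card (rankings m) \<noteq> 0"
    using card_rankings_pos[of m] by simp
  ultimately show ?thesis
    unfolding weighted_mean_pc_weight top_upt
    using finite_rankings[of m] by (simp add: Collect_conj_eq[symmetric] Int_def)
qed

section \<open>Instant-runoff voting\<close>

lemma irv_aux_in: "finite K \<Longrightarrow> K \<noteq> {} \<Longrightarrow> irv_aux tb P k K \<in> K"
proof (induction k arbitrary: K)
  case (Suc k)
  show ?case
  proof (cases "card K \<le> 1")
    case False
    let ?K' = "K - {tb K (plu_losers P K)}"
    have "\<not> K \<subseteq> {tb K (plu_losers P K)}"
      using False card_mono[of "{tb K (plu_losers P K)}" K] by auto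
    then have "irv_aux tb P k ?K' \<in> ?K'"
      using Suc by (intro Suc.IH) auto
    then show ?thesis
      using False by simp
  qed (use Suc.prems in \<open>simp add: some_in_eq\<close>)
qed (simp add: some_in_eq)

lemma plu_losers_nonempty:
  assumes "finite K" and "K \<noteq> {}"
  shows "plu_losers P K \<noteq> {}"
  using arg_min_if_finite[OF assms, of "plu_score P K"] by (auto simp: plu_losers_def not_less)

lemma sum_plu_score_le_length:
  assumes "finite K"
  shows "(\<Sum>d\<in>K. plu_score P K d) \<le> length P"
proof -
  have "(\<Sum>d\<in>K. plu_score P K d) = card (\<Union>d\<in>K. {v. v < length P \<and> top_among K (P ! v) = d})"
    unfolding plu_score_def using assms by (intro card_UN_disjoint[symmetric]) auto
  also have "\<dots> \<le> card {..<length P}"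
    by (intro card_mono) auto
  finally show ?thesis
    by simp
qed

lemma not_in_plu_losers:
  assumes "finite K" and "length P < card K * plu_score P K a"
  shows "a \<notin> plu_losers P K"
proof
  assume "a \<in> plu_losers P K"
  then have "(\<Sum>d\<in>K. plu_score P K a) \<le> (\<Sum>d\<in>K. plu_score P K d)"
    by (intro sum_mono) (simp add: plu_losers_def)
  then show False
    using sum_plu_score_le_length[OF assms(1), of P] assms(2) by simp
qed

lemma irv_aux_ne:
  assumes tb: "\<And>K T. T \<noteq> {} \<Longrightarrow> T \<subseteq> K \<Longrightarrow> tb K T \<in> T"
    and "a \<noteq> c" and "finite K" and "a \<in> K" and "card K \<le> Suc k"
    and "\<And>L. L \<subseteq> K \<Longrightarrow> a \<in> L \<Longrightarrow> c \<in> L \<Longrightarrow> length P < card L * plu_score P L a"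
  shows "irv_aux tb P k K \<noteq> c"
  using assms(3-6)
proof (induction k arbitrary: K)
  case 0
  then have "K = {a}"
    using card_le_Suc0_iff_eq by auto
  then show ?case
    using \<open>a \<noteq> c\<close> by simp
next
  case (Suc k)
  show ?case
  proof (cases "card K \<le> 1")
    case True
    then have "K = {a}"
      using Suc.prems(1,2) card_le_Suc0_iff_eq by auto
    then show ?thesis
      using \<open>a \<noteq> c\<close> by simp
  next
    case False
    let ?x = "tb K (plu_losers P K)"
    have step: "irv_aux tb P (Suc k) K = irv_aux tb P k (K - {?x})"
      using False by simp
    show ?thesis
    proof (cases "c \<in> K")
      case False
      have "\<not> K \<subseteq> {?x}"
        using \<open>\<not> card K \<le> 1\<close> card_mono[of "{?x}" K] by auto
      then have "irv_aux tb P k (K - {?x}) \<in> K"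
        using irv_aux_in[of "K - {?x}"] Suc.prems(1) by auto
      then show ?thesis
        using step False by auto
    next
      case True
      have losers: "plu_losers P K \<subseteq> K"
        by (auto simp: plu_losers_def)
      have "?x \<in> plu_losers P K"
        using Suc.prems(1,2) plu_losers_nonempty losers by (intro tb) auto
      moreover have "a \<notin> plu_losers P K"
        using Suc.prems True by (intro not_in_plu_losers) auto
      ultimately have "?x \<noteq> a" and "?x \<in> K"
        using losers by auto
      then have "irv_aux tb P k (K - {?x}) \<noteq> c"
        using Suc.prems by (intro Suc.IH) auto
      then show ?thesis
        using step by simp
    qed
  qed
qed

definition subelections :: "nat \<Rightarrow> nat \<Rightarrow> nat set set" where
  "subelections m a = {K. K \<subseteq> {1..m} \<and> a \<in> K \<and> 2 \<le> card K}"

definition above_average_everywhere :: "nat \<Rightarrow> nat list list \<Rightarrow> nat \<Rightarrow> bool" where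
  "above_average_everywhere m P a \<longleftrightarrow> (\<forall>K \<in> subelections m a. length P < card K * plu_score P K a)"

lemma finite_subelections: "finite (subelections m a)"
  by (rule finite_subset[of _ "Pow {1..m}"]) (auto simp: subelections_def)

lemma in_subelectionsI:
  assumes "K \<subseteq> {1..m}" and "a \<in> K" and "c \<in> K" and "a \<noteq> c"
  shows "K \<in> subelections m a"
proof -
  have "card {a, c} \<le> card K"
    using assms by (intro card_mono) (auto intro: finite_subset)
  then show ?thesis
    using assms by (simp add: subelections_def)
qed

lemma IRV_eq_if_above_average_everywhere:
  assumes tb: "\<And>K T. T \<noteq> {} \<Longrightarrow> T \<subseteq> K \<Longrightarrow> tb K T \<in> T"
    and "a \<in> {1..m}" and "above_average_everywhere m P a"
  shows "IRV tb m P = a"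
proof (rule ccontr)
  assume winner: "IRV tb m P \<noteq> a"
  have "length P < card L * plu_score P L a" if "L \<subseteq> {1..m}" "a \<in> L" "IRV tb m P \<in> L" for L
    using assms(3) in_subelectionsI[OF that winner[symmetric]] by (simp add: above_average_everywhere_def)
  then have "irv_aux tb P m {1..m} \<noteq> IRV tb m P"
    using assms(2) winner by (intro irv_aux_ne[OF tb]) auto
  then show False
    by (simp add: IRV_def)
qed

lemma top_among_ne_if_prefers:
  assumes "distinct r" and "c \<in> K" and "prefers r c a"
  shows "top_among K r \<noteq> a"
proof -
  obtain i j where ij: "i < j" "j < length r" "r ! i = c" "r ! j = a"
    using assms(3) by (auto simp: prefers_def)
  have r: "r = take j r @ a # drop (Suc j) r"
    using id_take_nth_drop[OF ij(2)] ij(4) by simp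
  have "c \<in> set (take j r)"
    using ij by (auto simp: in_set_conv_nth)
  then have "filter (\<lambda>d. d \<in> K) (take j r) \<noteq> []"
    using assms(2) by (auto simp: filter_empty_conv)
  then have "top_among K r \<in> set (take j r)"
    by (subst r) (auto dest: hd_in_set)
  moreover have "a \<notin> set (take j r)"
    using assms(1) by (subst (asm) r) auto
  ultimately show ?thesis
    by blast
qed

lemma plu_score_le_if_kept:
  assumes "length Q = length P" and "\<And>v. v < length P \<Longrightarrow> top_among K (P ! v) = a \<Longrightarrow> Q ! v = P ! v"
  shows "plu_score P K a \<le> plu_score Q K a"
  unfolding plu_score_def using assms by (intro card_mono) auto

lemma not_CM_IRV_if_above_average_everywhere:
  assumes tb: "\<And>K T. T \<noteq> {} \<Longrightarrow> T \<subseteq> K \<Longrightarrow> tb K T \<in> T"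
    and P: "P \<in> profiles m n" and a: "a \<in> {1..m}" and above: "above_average_everywhere m P a"
  shows "\<not> CM (IRV tb m) m P"
proof
  assume "CM (IRV tb m) m P"
  moreover have "IRV tb m P = a"
    using tb a above by (rule IRV_eq_if_above_average_everywhere)
  ultimately obtain Q where Q: "Q \<in> profiles m (length P)" and c: "IRV tb m Q \<noteq> a"
    and manipulators: "\<forall>v < length P. Q ! v \<noteq> P ! v \<longrightarrow> prefers (P ! v) (IRV tb m Q) a"
    unfolding CM_def by auto
  have "length Q < card L * plu_score Q L a"
    if L: "L \<subseteq> {1..m}" "a \<in> L" "IRV tb m Q \<in> L" for L
  proof -
    have "plu_score P L a \<le> plu_score Q L a"
    proof (rule plu_score_le_if_kept)
      show "Q ! v = P ! v" if "v < length P" and "top_among L (P ! v) = a" for v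
      proof -
        have "distinct (P ! v)"
          using P nth_mem[OF \<open>v < length P\<close>] by (auto simp: profiles_def rankings_def)
        then show ?thesis
          using that L(3) manipulators top_among_ne_if_prefers by metis
      qed
    qed (use Q in \<open>simp add: profiles_def\<close>)
    then have "card L * plu_score P L a \<le> card L * plu_score Q L a"
      by (rule mult_le_mono2)
    moreover have "length P < card L * plu_score P L a"
      using above in_subelectionsI[OF L c[symmetric]] by (simp add: above_average_everywhere_def)
    moreover have "length Q = length P"
      using Q by (simp add: profiles_def)
    ultimately show ?thesis
      by linarith
  qed
  then have "irv_aux tb Q m {1..m} \<noteq> IRV tb m Q"
    using a c by (intro irv_aux_ne[OF tb]) auto
  then show False
    by (simp add: IRV_def)
qed

section \<open>The probability of manipulability\<close>

lemma plu_score_eq_sum_list: "real (plu_score P K a) = (\<Sum>r\<leftarrow>P. of_bool (top_among K r = a))"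
proof -
  have "(\<Sum>r\<leftarrow>P. of_bool (top_among K r = a)) = (\<Sum>v<length P. of_bool (top_among K (P ! v) = a) :: real)"
    by (simp add: sum_list_sum_nth atLeast0LessThan)
  also have "\<dots> = real (plu_score P K a)"
    by (simp add: plu_score_def Int_def conj_commute)
  finally show ?thesis ..
qed

lemma product_expectation_not_above_average_le:
  assumes K: "K \<in> subelections m 1" and "0 < \<theta>" and "\<theta> \<le> 1" and "0 < n"
  defines "X \<equiv> \<lambda>r. of_bool (top_among K r = 1)"
  shows "product_expectation (pc_weight m \<theta>) (rankings m) n
      (\<lambda>P. of_bool (\<not> length P < card K * plu_score P K 1))
    \<le> weighted_variance (pc_weight m \<theta>) (rankings m) X / (n * (\<theta> * (1 - 1 / card K))\<^sup>2)"
proof -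
  let ?E = "product_expectation (pc_weight m \<theta>) (rankings m) n"
  let ?\<mu> = "weighted_mean (pc_weight m \<theta>) (rankings m) X"
  let ?\<delta> = "\<theta> * (1 - 1 / card K)"
  have card: "2 \<le> card K" and mean: "?\<mu> = \<theta> + (1 - \<theta>) / card K"
    using K weighted_mean_top_among_1 by (auto simp: subelections_def X_def)
  have "0 < ?\<delta>"
    using card \<open>0 < \<theta>\<close> by simp
  have "of_bool (\<not> n < card K * plu_score P K 1) \<le> (of_bool ((\<Sum>r\<leftarrow>P. X r) \<le> n * (?\<mu> - ?\<delta>)) :: real)"
    for P
  proof -
    have "n * (?\<mu> - ?\<delta>) = n / card K"
      using card by (simp add: mean field_simps)
    moreover have "(\<not> n < card K * plu_score P K 1) \<longleftrightarrow> real (plu_score P K 1) \<le> n / card K"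
      using card by (simp add: field_simps not_less flip: of_nat_mult)
    ultimately show ?thesis
      by (simp add: plu_score_eq_sum_list X_def)
  qed
  then have "?E (\<lambda>P. of_bool (\<not> length P < card K * plu_score P K 1))
      \<le> ?E (\<lambda>P. of_bool ((\<Sum>r\<leftarrow>P. X r) \<le> n * (?\<mu> - ?\<delta>)))"
    using assms(2,3) by (intro product_expectation_mono pc_weight_nonneg) auto
  also have "\<dots> \<le> weighted_variance (pc_weight m \<theta>) (rankings m) X / (n * ?\<delta>\<^sup>2)"
    using assms(2,3,4) \<open>0 < ?\<delta>\<close>
    by (intro product_expectation_sum_list_lower_tail pc_weight_nonneg sum_pc_weight) auto
  finally show ?thesis .
qed

lemma of_bool_CM_IRV_le_sum:
  assumes tb: "\<And>K T. T \<noteq> {} \<Longrightarrow> T \<subseteq> K \<Longrightarrow> tb K T \<in> T"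
    and "m \<ge> 1" and P: "P \<in> profiles m n"
  shows "of_bool (CM (IRV tb m) m P)
    \<le> (\<Sum>K\<in>subelections m 1. of_bool (\<not> length P < card K * plu_score P K 1) :: real)"
proof (cases "CM (IRV tb m) m P")
  case True
  then have "\<not> above_average_everywhere m P 1"
    using not_CM_IRV_if_above_average_everywhere[where tb = tb, OF tb P] \<open>m \<ge> 1\<close> by auto
  then obtain K where K: "K \<in> subelections m 1" and "\<not> length P < card K * plu_score P K 1"
    by (auto simp: above_average_everywhere_def)
  then have "1 \<le> (\<Sum>K\<in>subelections m 1. of_bool (\<not> length P < card K * plu_score P K 1) :: real)"
    using member_le_sum[OF K _ finite_subelections,
        of "\<lambda>K. of_bool (\<not> length P < card K * plu_score P K 1) :: real"]
    by simp
  then show ?thesis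
    using True by simp
qed (simp add: sum_nonneg)

lemma rho_IRV_le_const_over_n:
  assumes tb: "\<And>K T. T \<noteq> {} \<Longrightarrow> T \<subseteq> K \<Longrightarrow> tb K T \<in> T"
    and "m \<ge> 1" and "0 < \<theta>" and "\<theta> \<le> 1"
  obtains C where "\<And>n. 0 < n \<Longrightarrow> rho (IRV tb m) m n \<theta> \<le> C / n"
proof
  let ?E = "product_expectation (pc_weight m \<theta>) (rankings m)"
  let ?V = "\<lambda>K. weighted_variance (pc_weight m \<theta>) (rankings m) (\<lambda>r. of_bool (top_among K r = 1))"
  let ?S = "subelections m 1"
  let ?below = "\<lambda>K P. of_bool (\<not> length P < card K * plu_score P K 1) :: real"
  fix n :: nat
  assume "0 < n"
  have "rho (IRV tb m) m n \<theta> \<le> ?E n (\<lambda>P. \<Sum>K\<in>?S. ?below K P)"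
    unfolding rho_eq_product_expectation using assms
    by (intro product_expectation_mono pc_weight_nonneg of_bool_CM_IRV_le_sum)
      (auto simp: profiles_eq_lists)
  also have "\<dots> = (\<Sum>K\<in>?S. ?E n (?below K))"
    by (rule product_expectation_sum[OF finite_subelections])
  also have "\<dots> \<le> (\<Sum>K\<in>?S. ?V K / (n * (\<theta> * (1 - 1 / card K))\<^sup>2))"
    using assms(3,4) \<open>0 < n\<close> by (intro sum_mono product_expectation_not_above_average_le) auto
  also have "\<dots> = (\<Sum>K\<in>?S. ?V K / (\<theta> * (1 - 1 / card K))\<^sup>2) / n"
    unfolding sum_divide_distrib by (simp add: mult.commute)
  finally show "rho (IRV tb m) m n \<theta> \<le> \<dots>" .
qed

theorem theorem5p3:
  fixes m :: nat and \<theta> :: real and tb :: "nat set \<Rightarrow> nat set \<Rightarrow> nat"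
  assumes "m \<ge> 1" and "0 < \<theta>" and "\<theta> \<le> 1"
    and "\<And>K T. T \<noteq> {} \<Longrightarrow> T \<subseteq> K \<Longrightarrow> tb K T \<in> T"
  shows "(\<lambda>n. rho (IRV tb m) m n \<theta>) \<longlonglongrightarrow> 0"
proof -
  obtain C where C: "\<And>n. 0 < n \<Longrightarrow> rho (IRV tb m) m n \<theta> \<le> C / n"
    using rho_IRV_le_const_over_n[where tb = tb, OF assms(4,1,2,3)] by blast
  show ?thesis
  proof (rule tendsto_sandwich[where f = "\<lambda>_. 0" and h = "\<lambda>n. C / real n"])
    show "\<forall>\<^sub>F n in sequentially. 0 \<le> rho (IRV tb m) m n \<theta>"
      unfolding rho_def using assms(2,3)
      by (intro always_eventually allI sum_nonneg prod_nonneg pc_weight_nonneg) auto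
    show "\<forall>\<^sub>F n in sequentially. rho (IRV tb m) m n \<theta> \<le> C / n"
      using eventually_gt_at_top[of 0] by eventually_elim (rule C)
  qed (simp_all add: lim_const_over_n)
qed

end
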